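(* Let $f(z)=\sum_{n\ge1} f_n z^n$ be a formal power series over $\mathbb{C}$ with $f_1\neq 0$ such that $-f(z)$ has compositional order exactly $2$, i.e. $-f(-f(z))=z$ and $-f(z)\neq z$. Then the set $\{g(z)\in F_0[[z]] : (g(z),f(z)) \text{ is a pseudo-involution}\}$ is an infinite subgroup of the multiplicative group $F_0[[z]]$.
   Context: $F_0[[z]]$ denotes the set of formal power series over $\mathbb{C}$ with nonzero constant term, which is a group under multiplication of power series. A Riordan matrix is a pair $(g(z),f(z))$ of formal power series over $\mathbb{C}$ with $g(z)=\sum_{n\ge 0} g_n z^n$, $g_0\neq 0$, and $f(z)=\sum_{n\ge 1} f_n z^n$ with $f_1\neq 0$; it represents the infinite lower-triangular matrix whose $k$-th column ($k\ge 0$) has generating function $g(z)f(z)^k$. Riordan matrices form a group under matrix multiplication, where $(g(z),f(z))*(h(z),l(z))=(g(z)h(f(z)),\,l(f(z)))$ and the identity is $(1,z)$. Let $M=(1,-z)$. A Riordan matrix $L$ is called a pseudo-involution if $(L*M)*(L*M)=(1,z)$. *)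

theory Defs
  imports "HOL-Computational_Algebra.Formal_Power_Series"
begin

definition riordan :: "complex fps \<times> complex fps \<Rightarrow> bool" where
  "riordan p \<longleftrightarrow> fps_nth (fst p) 0 \<noteq> 0 \<and> fps_nth (snd p) 0 = 0 \<and> fps_nth (snd p) 1 \<noteq> 0"

definition riordan_mult ::
  "complex fps \<times> complex fps \<Rightarrow> complex fps \<times> complex fps \<Rightarrow> complex fps \<times> complex fps" where
  "riordan_mult p q = (fst p * (fst q oo snd p), snd q oo snd p)"

definition riordan_M :: "complex fps \<times> complex fps" where
  "riordan_M = (1, - fps_X)"

definition pseudo_involution :: "complex fps \<times> complex fps \<Rightarrow> bool" where
  "pseudo_involution L \<longleftrightarrow> riordan L \<and>
     riordan_mult (riordan_mult L riordan_M) (riordan_mult L riordan_M) = (1, fps_X)"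

end

theory Submission
  imports Defs
begin

text \<open>Since \<open>(L * M) * (L * M) = (g * (g \<circ> -f), (-f) \<circ> (-f))\<close>, once \<open>-f\<close> is an involution the
pseudo-involutions \<open>(g, f)\<close> are exactly the solutions of the cocycle equation
\<open>g \<cdot> (g \<circ> h) = 1\<close> for \<open>h = -f\<close>. Composition with \<open>h\<close> is a ring endomorphism, so these solutions
form a multiplicative group. For every \<open>k\<close> with \<open>k(0) \<noteq> 0\<close> the quotient \<open>(k \<circ> h) / k\<close> is a
solution, and the family \<open>k = c + z\<close>, \<open>c \<noteq> 0\<close>, gives pairwise distinct ones as long as \<open>h \<noteq> z\<close>.\<close>

definition involution_cocycles :: "'a::field fps \<Rightarrow> 'a fps set" where
  "involution_cocycles h = {g. fps_nth g 0 \<noteq> 0 \<and> g * (g oo h) = 1}"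

lemma riordan_mult_riordan_M:
  assumes "fps_nth f 0 = 0"
  shows "riordan_mult (g, f) riordan_M = (g, - f)"
  using assms by (simp add: riordan_mult_def riordan_M_def fps_compose_uminus)

lemma pseudo_involution_iff:
  assumes "fps_nth f 0 = 0"
  shows "pseudo_involution (g, f) \<longleftrightarrow>
           riordan (g, f) \<and> g * (g oo - f) = 1 \<and> (- f) oo (- f) = fps_X"
  unfolding pseudo_involution_def riordan_mult_riordan_M[OF assms]
  by (simp add: riordan_mult_def)

lemma one_in_involution_cocycles: "1 \<in> involution_cocycles h"
  by (simp add: involution_cocycles_def)

lemma mult_in_involution_cocycles:
  assumes "fps_nth h 0 = 0" and "g \<in> involution_cocycles h" and "k \<in> involution_cocycles h"
  shows "g * k \<in> involution_cocycles h"
proof -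
  have "(g * k) * ((g * k) oo h) = (g * (g oo h)) * (k * (k oo h))"
    by (simp only: fps_compose_mult_distrib[OF assms(1)] mult_ac)
  also have "\<dots> = 1"
    using assms(2,3) by (simp add: involution_cocycles_def)
  finally show ?thesis
    using assms(2,3) by (simp add: involution_cocycles_def)
qed

lemma inverse_in_involution_cocycles:
  assumes "fps_nth h 0 = 0" and "g \<in> involution_cocycles h"
  shows "inverse g \<in> involution_cocycles h"
proof -
  have g0: "fps_nth g 0 \<noteq> 0" and cocycle: "g * (g oo h) = 1"
    using assms(2) by (auto simp: involution_cocycles_def)
  have "inverse g * (inverse g oo h) = inverse (g * (g oo h))"
    by (simp add: fps_inverse_compose[OF assms(1) g0] fps_inverse_mult)
  then show ?thesis
    using g0 cocycle by (simp add: involution_cocycles_def)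
qed

lemma quotient_in_involution_cocycles:
  assumes h0: "fps_nth h 0 = 0" and hh: "h oo h = fps_X" and k0: "fps_nth k 0 \<noteq> 0"
  shows "(k oo h) * inverse k \<in> involution_cocycles h"
proof -
  have kh0: "fps_nth (k oo h) 0 \<noteq> 0"
    using k0 by simp
  have "((k oo h) * inverse k) oo h = ((k oo h) oo h) * (inverse k oo h)"
    by (rule fps_compose_mult_distrib[OF h0])
  also have "\<dots> = k * inverse (k oo h)"
    by (simp add: fps_compose_assoc[OF h0 h0, symmetric] hh fps_inverse_compose[OF h0 k0])
  finally have "((k oo h) * inverse k) * (((k oo h) * inverse k) oo h)
                  = ((k oo h) * inverse (k oo h)) * (k * inverse k)"
    by (simp only: mult_ac)
  also have "\<dots> = 1"
    using k0 kh0 by (simp add: inverse_mult_eq_1')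
  finally show ?thesis
    using k0 by (simp add: involution_cocycles_def)
qed

lemma fps_mult_inverse_eq_iff:
  fixes a b c d :: "'a::field fps"
  assumes b0: "fps_nth b 0 \<noteq> 0" and d0: "fps_nth d 0 \<noteq> 0"
  shows "a * inverse b = c * inverse d \<longleftrightarrow> a * d = c * b"
proof
  assume eq: "a * inverse b = c * inverse d"
  have "a * d = (a * inverse b) * b * d"
    using b0 by (simp add: mult.assoc inverse_mult_eq_1)
  also have "\<dots> = c * (inverse d * d) * b"
    by (simp only: eq mult_ac)
  finally show "a * d = c * b"
    using d0 by (simp add: inverse_mult_eq_1)
next
  assume eq: "a * d = c * b"
  have "a * inverse b = a * (d * inverse d) * inverse b"
    using d0 by (simp add: inverse_mult_eq_1')
  also have "\<dots> = (a * d) * inverse b * inverse d"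
    by (simp only: mult_ac)
  also have "\<dots> = c * (b * inverse b) * inverse d"
    by (simp only: eq mult_ac)
  finally show "a * inverse b = c * inverse d"
    using b0 by (simp add: inverse_mult_eq_1')
qed

lemma inj_on_linear_quotients:
  fixes h :: "'a::field fps"
  assumes "h \<noteq> fps_X"
  shows "inj_on (\<lambda>c. (fps_const c + h) * inverse (fps_const c + fps_X)) {c. c \<noteq> 0}"
proof (rule inj_onI)
  fix c d :: 'a
  assume "c \<in> {c. c \<noteq> 0}" "d \<in> {c. c \<noteq> 0}"
    and "(fps_const c + h) * inverse (fps_const c + fps_X)
       = (fps_const d + h) * inverse (fps_const d + fps_X)"
  then have "(fps_const c + h) * (fps_const d + fps_X) - (fps_const d + h) * (fps_const c + fps_X) = 0"
    using fps_mult_inverse_eq_iff[of "fps_const c + fps_X" "fps_const d + fps_X"] by simp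
  also have "(fps_const c + h) * (fps_const d + fps_X) - (fps_const d + h) * (fps_const c + fps_X)
               = (fps_const c - fps_const d) * (fps_X - h)"
    by algebra
  finally have "(fps_const c - fps_const d) * (fps_X - h) = 0" .
  then show "c = d"
    using assms by simp
qed

lemma infinite_involution_cocycles:
  fixes h :: "'a::field_char_0 fps"
  assumes h0: "fps_nth h 0 = 0" and hh: "h oo h = fps_X" and hX: "h \<noteq> fps_X"
  shows "infinite (involution_cocycles h)"
proof -
  let ?q = "\<lambda>c. (fps_const c + h) * inverse (fps_const c + fps_X)"
  have "?q ` {c. c \<noteq> 0} \<subseteq> involution_cocycles h"
    using quotient_in_involution_cocycles[OF h0 hh, of "fps_const _ + fps_X"] h0
    by (auto simp: fps_compose_add_distrib)
  moreover have "infinite (?q ` {c. c \<noteq> 0})"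
  proof
    assume "finite (?q ` {c. c \<noteq> 0})"
    then have "finite (UNIV - {0 :: 'a})"
      using finite_imageD[OF _ inj_on_linear_quotients[OF hX]]
      by (simp add: Collect_neg_eq Compl_eq_Diff_UNIV)
    then show False
      using infinite_UNIV_char_0[where 'a = 'a] by simp
  qed
  ultimately show ?thesis
    using infinite_super by blast
qed

theorem theorem25:
  fixes f :: "complex fps"
  assumes "fps_nth f 0 = 0" and "fps_nth f 1 \<noteq> 0"
    and "(- f) oo (- f) = fps_X" and "- f \<noteq> fps_X"
  defines "S \<equiv> {g :: complex fps. fps_nth g 0 \<noteq> 0 \<and> pseudo_involution (g, f)}"
  shows "S \<subseteq> {g. fps_nth g 0 \<noteq> 0} \<and> 1 \<in> S
         \<and> (\<forall>g\<in>S. \<forall>h\<in>S. g * h \<in> S) \<and> (\<forall>g\<in>S. inverse g \<in> S)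
         \<and> infinite S"
proof -
  have h0: "fps_nth (- f) 0 = 0"
    using assms(1) by simp
  have "S = involution_cocycles (- f)"
    using assms(1-3) unfolding S_def involution_cocycles_def
    by (auto simp: pseudo_involution_iff riordan_def)
  then show ?thesis
    using one_in_involution_cocycles mult_in_involution_cocycles[OF h0]
      inverse_in_involution_cocycles[OF h0] infinite_involution_cocycles[OF h0 assms(3,4)]
    by (auto simp: involution_cocycles_def)
qed

end
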